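(* Let $S^1_\infty=\mathbb{R}\cup\{\infty\}$ with the projective action of $\mathrm{PSL}(2,\mathbb{R})$, and let $x\partial_x$ denote the smooth vector field on $S^1_\infty$ extending $x\partial_x\in\mathfrak{X}(\mathbb{R})$. If $Z\in\mathfrak{X}(S^1_\infty)$ is invariant by some hyperbolic element whose fixed point set is $\{0,\infty\}$, then $Z=\varkappa\,x\partial_x$ for some $\varkappa\in\mathbb{R}$. In particular, if $H\subset\mathrm{PSL}(2,\mathbb{R})$ is a subgroup containing at least one hyperbolic element, and consisting of the identity, hyperbolic elements with fixed point set $\{0,\infty\}$ and possibly elliptic elements leaving $\{0,\infty\}$ invariant, then the space $\mathfrak{X}(S^1_\infty,H)$ of $H$-invariant vector fields equals $\mathbb{R}\,x\partial_x$ if $H$ has no elliptic element, and equals $0$ otherwise.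
   Context: An element of $\mathrm{PSL}(2,\mathbb{R})$, acting on $S^1_\infty$ by $x\mapsto(ax+b)/(cx+d)$, is hyperbolic if it has exactly two fixed points in $S^1_\infty$, and elliptic if it has none. *)

theory Defs
  imports "HOL-Analysis.Analysis"
begin

datatype ext = Fin real | Infty

definition smooth_fun :: "(real \<Rightarrow> real) \<Rightarrow> bool" where
  "smooth_fun f \<longleftrightarrow> (\<forall>n x. ((deriv ^^ n) f) differentiable (at x))"

text \<open>Elements of SL(2,R) as quadruples (a,b,c,d) standing for the matrix
  [[a,b],[c,d]]; PSL(2,R) = SL(2,R)/{+-1}. All notions below depend only on the
  class in PSL(2,R).\<close>
type_synonym mat2 = "real \<times> real \<times> real \<times> real"

definition SL2 :: "mat2 set" where
  "SL2 = {(a,b,c,d). a*d - b*c = 1}"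

definition mmult :: "mat2 \<Rightarrow> mat2 \<Rightarrow> mat2" where
  "mmult = (\<lambda>(a,b,c,d) (a',b',c',d'). (a*a' + b*c', a*b' + b*d', c*a' + d*c', c*b' + d*d'))"

definition minv :: "mat2 \<Rightarrow> mat2" where
  "minv = (\<lambda>(a,b,c,d). (d, -b, -c, a))"

definition mid :: mat2 where "mid = (1,0,0,1)"
definition mnegid :: mat2 where "mnegid = (-1,0,0,-1)"

fun act :: "mat2 \<Rightarrow> ext \<Rightarrow> ext" where
  "act (a,b,c,d) (Fin x) = (if c*x + d = 0 then Infty else Fin ((a*x + b)/(c*x + d)))"
| "act (a,b,c,d) Infty = (if c = 0 then Infty else Fin (a/c))"

definition fixset :: "mat2 \<Rightarrow> ext set" where
  "fixset h = {p. act h p = p}"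

definition hyperbolic :: "mat2 \<Rightarrow> bool" where
  "hyperbolic h \<longleftrightarrow> h \<in> SL2 \<and> finite (fixset h) \<and> card (fixset h) = 2"

definition elliptic :: "mat2 \<Rightarrow> bool" where
  "elliptic h \<longleftrightarrow> h \<in> SL2 \<and> fixset h = {}"

text \<open>Charts: at finite points the coordinate x; at infinity the coordinate y = 1/x.
  A vector field Z on S^1_infty is encoded by Z :: ext => real, where Z (Fin x) is
  the coefficient of d/dx at x and Z Infty is the coefficient of d/dy at y = 0.
  Since d/dx = -y^2 d/dy, in the y-chart the field reads
  y \<mapsto> -y^2 Z(Fin (1/y)) for y \<noteq> 0.\<close>
definition infchart_rep :: "(ext \<Rightarrow> real) \<Rightarrow> real \<Rightarrow> real" where
  "infchart_rep Z y = (if y = 0 then Z Infty else - (y^2) * Z (Fin (1/y)))"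

definition vector_fields :: "(ext \<Rightarrow> real) set" where
  "vector_fields = {Z. smooth_fun (\<lambda>x. Z (Fin x)) \<and> smooth_fun (infchart_rep Z)}"

text \<open>Differential of the action of h at p, computed in the charts at p and at act h p.\<close>
fun dact :: "mat2 \<Rightarrow> ext \<Rightarrow> real" where
  "dact (a,b,c,d) (Fin x) =
     (if c*x + d = 0 then deriv (\<lambda>t. (c*t + d)/(a*t + b)) x
      else deriv (\<lambda>t. (a*t + b)/(c*t + d)) x)"
| "dact (a,b,c,d) Infty =
     (if c = 0 then deriv (\<lambda>u. (c + d*u)/(a + b*u)) 0
      else deriv (\<lambda>u. (a + b*u)/(c + d*u)) 0)"

definition invariant_by :: "mat2 \<Rightarrow> (ext \<Rightarrow> real) \<Rightarrow> bool" where
  "invariant_by h Z \<longleftrightarrow> (\<forall>p. Z (act h p) = dact h p * Z p)"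

text \<open>The vector field x d/dx; in the y-chart it is -y d/dy, vanishing at infinity.\<close>
fun xdx :: "ext \<Rightarrow> real" where
  "xdx (Fin x) = x"
| "xdx Infty = 0"

text \<open>A subgroup of PSL(2,R) is encoded by its preimage in SL(2,R): a subgroup of
  SL(2,R) containing -1.\<close>
definition psl_subgroup :: "mat2 set \<Rightarrow> bool" where
  "psl_subgroup H \<longleftrightarrow> H \<subseteq> SL2 \<and> mid \<in> H \<and> mnegid \<in> H \<and>
     (\<forall>g\<in>H. \<forall>h\<in>H. mmult g h \<in> H) \<and> (\<forall>h\<in>H. minv h \<in> H)"

definition invariant_fields :: "mat2 set \<Rightarrow> (ext \<Rightarrow> real) set" where
  "invariant_fields H = {Z \<in> vector_fields. \<forall>h\<in>H. invariant_by h Z}"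

end

theory Submission
  imports Defs "HOL-Complex_Analysis.Cauchy_Integral_Formula"
begin

text \<open>A hyperbolic element fixing \<open>0\<close> and \<open>\<infinity>\<close> is \<open>x \<mapsto> \<lambda> x\<close> with \<open>0 < \<lambda> \<noteq> 1\<close>.
  Invariance of \<open>Z\<close> forces \<open>Z(\<infinity>) = 0\<close> (the derivative at \<open>\<infinity>\<close> is \<open>1/\<lambda> \<noteq> 1\<close>) and
  \<open>Z(\<lambda> x) = \<lambda> Z(x)\<close> on \<open>\<real>\<close>. Iterating towards \<open>0\<close>, the difference quotients
  \<open>Z(\<lambda>\<^sup>n x)/(\<lambda>\<^sup>n x) = Z(x)/x\<close> converge to \<open>Z'(0)\<close>, so \<open>Z = Z'(0) x\<partial>\<^sub>x\<close>.
  An elliptic element preserving \<open>{0,\<infinity>}\<close> swaps the two points, i.e. is \<open>x \<mapsto> -\<mu>/x\<close>,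
  and it sends \<open>x\<partial>\<^sub>x\<close> to \<open>-x\<partial>\<^sub>x\<close>.\<close>

lemma homogeneous_imp_linear:
  fixes f :: "real \<Rightarrow> real"
  assumes deriv0: "(f has_real_derivative D) (at 0)"
    and hom: "\<And>x. f (l * x) = l * f x" and "l \<noteq> 0" "\<bar>l\<bar> \<noteq> 1"
  shows "f x = D * x"
proof -
  have "f 0 = 0"
    using hom[of 0] \<open>\<bar>l\<bar> \<noteq> 1\<close> by (cases "l = 1") auto
  obtain r where r: "r \<noteq> 0" "\<bar>r\<bar> < 1" and hom_r: "\<And>x. f (r * x) = r * f x"
  proof (cases "\<bar>l\<bar> < 1")
    case True
    then show ?thesis using that \<open>l \<noteq> 0\<close> hom by blast
  next
    case False
    have "f (inverse l * x) = inverse l * f x" for x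
      using hom[of "inverse l * x"] \<open>l \<noteq> 0\<close> by (simp add: field_simps)
    moreover have "\<bar>inverse l\<bar> < 1"
      using False \<open>\<bar>l\<bar> \<noteq> 1\<close> by (simp add: abs_inverse inverse_less_1_iff)
    ultimately show ?thesis using that[of "inverse l"] \<open>l \<noteq> 0\<close> by (simp add: abs_inverse)
  qed
  have hom_pow: "f (r ^ n * x) = r ^ n * f x" for n x
    by (induction n arbitrary: x) (simp_all add: mult.assoc hom_r)
  show ?thesis
  proof (cases "x = 0")
    case True
    then show ?thesis using \<open>f 0 = 0\<close> by simp
  next
    case False
    have lim: "(\<lambda>n. r ^ n * x) \<longlonglongrightarrow> 0"
      using LIMSEQ_power_zero[of r] r by (auto intro: tendsto_mult_left_zero)
    have nonzero: "r ^ n * x \<noteq> 0" for n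
      using False r by simp
    have "(f (0 + r ^ n * x) - f 0) / (r ^ n * x) = f x / x" for n
      using hom_pow \<open>f 0 = 0\<close> nonzero[of n] r(1) by simp
    then have "D = f x / x"
      using field_derivative_lim_unique[OF deriv0 lim nonzero] by simp
    then show ?thesis using False by simp
  qed
qed

lemma smooth_fun_differentiable: "smooth_fun f \<Longrightarrow> f differentiable (at x)"
  unfolding smooth_fun_def by (metis funpow_0)

lemma smooth_fun_linear: "smooth_fun (\<lambda>x. k * x)"
  unfolding smooth_fun_def
proof (intro allI)
  fix n :: nat and x :: real
  show "((deriv ^^ n) (\<lambda>x. k * x)) differentiable (at x)"
    by (cases "n = 0") auto
qed

lemma xdx_multiple_in_vector_fields: "(\<lambda>p. k * xdx p) \<in> vector_fields"
proof -
  have "infchart_rep (\<lambda>p. k * xdx p) = (\<lambda>y. (- k) * y)"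
    by (auto simp: infchart_rep_def power2_eq_square)
  then show ?thesis
    unfolding vector_fields_def mem_Collect_eq xdx.simps using smooth_fun_linear by metis
qed

lemma forall_ext_iff: "(\<forall>p. P p) \<longleftrightarrow> (\<forall>x. P (Fin x)) \<and> P Infty"
  by (metis ext.exhaust)

lemma dact_diagonal_Fin: "d \<noteq> 0 \<Longrightarrow> dact (a, 0, 0, d) (Fin x) = a / d"
  by (auto intro!: DERIV_imp_deriv derivative_eq_intros simp: power2_eq_square)

lemma dact_diagonal_Infty: "a \<noteq> 0 \<Longrightarrow> dact (a, 0, 0, d) Infty = d / a"
  by (auto intro!: DERIV_imp_deriv derivative_eq_intros simp: power2_eq_square)

lemma invariant_by_diagonal_iff:
  assumes "a \<noteq> 0" "d \<noteq> 0"
  shows "invariant_by (a, 0, 0, d) Z \<longleftrightarrow>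
    (\<forall>x. Z (Fin (a / d * x)) = a / d * Z (Fin x)) \<and> Z Infty = d / a * Z Infty"
  unfolding invariant_by_def forall_ext_iff using assms
  by (simp add: dact_diagonal_Fin dact_diagonal_Infty del: dact.simps)

lemma xdx_multiple_invariant_by_diagonal:
  "a \<noteq> 0 \<Longrightarrow> d \<noteq> 0 \<Longrightarrow> invariant_by (a, 0, 0, d) (\<lambda>p. k * xdx p)"
  by (simp add: invariant_by_diagonal_iff)

lemma diagonal_invariant_field_eq_xdx_multiple:
  assumes Z: "Z \<in> vector_fields" and inv: "invariant_by (a, 0, 0, d) Z"
    and "a * d = 1" "a \<noteq> d"
  shows "\<exists>\<kappa>. Z = (\<lambda>p. \<kappa> * xdx p)"
proof -
  have "a \<noteq> 0" "d \<noteq> 0"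
    using \<open>a * d = 1\<close> by auto
  then have hom: "\<And>x. Z (Fin (a / d * x)) = a / d * Z (Fin x)"
    and at_Infty: "Z Infty = d / a * Z Infty"
    using inv by (simp_all add: invariant_by_diagonal_iff)
  have "d / a \<noteq> 1"
    using \<open>a \<noteq> d\<close> \<open>a \<noteq> 0\<close> by simp
  with at_Infty have "Z Infty = 0"
    by (metis mult_cancel_right1)
  have "a / d = a\<^sup>2"
    using \<open>a * d = 1\<close> \<open>d \<noteq> 0\<close> by (simp add: field_simps power2_eq_square)
  moreover have "a\<^sup>2 \<noteq> 1"
    using \<open>a * d = 1\<close> \<open>a \<noteq> d\<close> by (auto simp: power2_eq_1_iff)
  ultimately have "a / d \<noteq> 0" "\<bar>a / d\<bar> \<noteq> 1"
    using \<open>a \<noteq> 0\<close> by simp_all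
  moreover obtain D where "((\<lambda>x. Z (Fin x)) has_real_derivative D) (at 0)"
    using Z smooth_fun_differentiable unfolding vector_fields_def real_differentiable_def
    by blast
  ultimately have "Z (Fin x) = D * x" for x
    using homogeneous_imp_linear[where f = "\<lambda>x. Z (Fin x)"] hom by blast
  with \<open>Z Infty = 0\<close> have "Z = (\<lambda>p. D * xdx p)"
    by (auto simp: fun_eq_iff forall_ext_iff)
  then show ?thesis ..
qed

lemma hyperbolic_fixing_0_Infty_diagonal:
  assumes "hyperbolic h" "fixset h = {Fin 0, Infty}"
  obtains a d where "h = (a, 0, 0, d)" "a * d = 1" "a \<noteq> d"
proof -
  obtain a b c d where h: "h = (a, b, c, d)"
    by (cases h) auto
  have "act h Infty = Infty" "act h (Fin 0) = Fin 0" "act h (Fin 1) \<noteq> Fin 1"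
    using assms(2) unfolding fixset_def by (auto simp: set_eq_iff)
  then have "c = 0" "b = 0" "d \<noteq> 0" "a \<noteq> d"
    unfolding h by (auto split: if_splits)
  moreover have "a * d - b * c = 1"
    using assms(1) h by (simp add: hyperbolic_def SL2_def)
  ultimately show ?thesis
    using that h by simp
qed

lemma elliptic_swapping_0_Infty_antidiagonal:
  assumes "elliptic h" "act h ` {Fin 0, Infty} = {Fin 0, Infty}"
  obtains b c where "h = (0, b, c, 0)" "b * c = -1"
proof -
  obtain a b c d where h: "h = (a, b, c, d)"
    by (cases h) auto
  have "act h Infty \<noteq> Infty" "act h (Fin 0) \<noteq> Fin 0"
    using assms(1) unfolding elliptic_def fixset_def by auto
  with assms(2) have "act h Infty = Fin 0" "act h (Fin 0) = Infty"
    by auto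
  then have "a = 0" "d = 0"
    unfolding h by (auto split: if_splits)
  moreover have "a * d - b * c = 1"
    using assms(1) h by (simp add: elliptic_def SL2_def)
  ultimately show ?thesis
    using that h by simp
qed

lemma xdx_multiple_invariant_by_antidiagonal_imp_zero:
  assumes "b \<noteq> 0" "c \<noteq> 0" and inv: "invariant_by (0, b, c, 0) (\<lambda>p. k * xdx p)"
  shows "k = 0"
proof -
  have "dact (0, b, c, 0) (Fin 1) = - b / c"
    using \<open>c \<noteq> 0\<close> by (simp add: power2_eq_square)
  moreover have "act (0, b, c, 0) (Fin 1) = Fin (b / c)"
    using \<open>c \<noteq> 0\<close> by simp
  ultimately have "k * (b / c) = - b / c * k"
    using inv unfolding invariant_by_def by (metis mult.right_neutral xdx.simps(1))
  then have "2 * k * (b / c) = 0"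
    by (simp add: algebra_simps)
  then show ?thesis
    using assms(1,2) by simp
qed

lemma infinite_UNIV_ext: "infinite (UNIV :: ext set)"
  by (meson finite_imageD finite_subset infinite_UNIV_char_0 inj_def ext.inject subset_UNIV)

lemma fixset_mid_mnegid: "fixset mid = UNIV" "fixset mnegid = UNIV"
  unfolding fixset_def mid_def mnegid_def by (simp_all add: set_eq_iff forall_ext_iff)

lemma not_hyperbolic_mid_mnegid: "\<not> hyperbolic mid" "\<not> hyperbolic mnegid"
  using infinite_UNIV_ext by (simp_all add: hyperbolic_def fixset_mid_mnegid)

lemma not_elliptic_mid_mnegid: "\<not> elliptic mid" "\<not> elliptic mnegid"
  by (simp_all add: elliptic_def fixset_mid_mnegid)

lemma hyperbolic_not_elliptic: "hyperbolic h \<Longrightarrow> \<not> elliptic h"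
  by (auto simp: hyperbolic_def elliptic_def)

lemma invariant_by_mid_mnegid: "invariant_by mid Z" "invariant_by mnegid Z"
  unfolding mid_def mnegid_def by (simp_all add: invariant_by_diagonal_iff)

lemma xdx_multiple_invariant_by_hyperbolic:
  assumes "hyperbolic h" "fixset h = {Fin 0, Infty}"
  shows "invariant_by h (\<lambda>p. k * xdx p)"
proof -
  obtain a d where "h = (a, 0, 0, d)" "a * d = 1"
    using assms by (rule hyperbolic_fixing_0_Infty_diagonal)
  moreover from \<open>a * d = 1\<close> have "a \<noteq> 0" "d \<noteq> 0"
    by auto
  ultimately show ?thesis
    by (simp add: xdx_multiple_invariant_by_diagonal)
qed

lemma xdx_multiple_invariant_by_elliptic_imp_zero:
  assumes "elliptic h" "act h ` {Fin 0, Infty} = {Fin 0, Infty}"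
    and "invariant_by h (\<lambda>p. k * xdx p)"
  shows "k = 0"
proof -
  obtain b c where "h = (0, b, c, 0)" "b * c = -1"
    using assms(1,2) by (rule elliptic_swapping_0_Infty_antidiagonal)
  moreover from \<open>b * c = -1\<close> have "b \<noteq> 0" "c \<noteq> 0"
    by auto
  ultimately show ?thesis
    using assms(3) xdx_multiple_invariant_by_antidiagonal_imp_zero by blast
qed

lemma hyperbolic_invariant_field_eq_xdx_multiple:
  assumes "Z \<in> vector_fields" "hyperbolic h" "fixset h = {Fin 0, Infty}" "invariant_by h Z"
  shows "\<exists>\<kappa>. Z = (\<lambda>p. \<kappa> * xdx p)"
proof -
  obtain a d where "h = (a, 0, 0, d)" "a * d = 1" "a \<noteq> d"
    using assms(2,3) by (rule hyperbolic_fixing_0_Infty_diagonal)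
  then show ?thesis
    using assms(1,4) diagonal_invariant_field_eq_xdx_multiple by blast
qed

lemma zero_in_invariant_fields: "(\<lambda>p. 0) \<in> invariant_fields H"
  using xdx_multiple_in_vector_fields[of 0] by (simp add: invariant_fields_def invariant_by_def)

lemma invariant_fields_subset_xdx_multiples:
  assumes "h \<in> H" "hyperbolic h" "fixset h = {Fin 0, Infty}"
  shows "invariant_fields H \<subseteq> {Z. \<exists>\<kappa>. Z = (\<lambda>p. \<kappa> * xdx p)}"
  using assms hyperbolic_invariant_field_eq_xdx_multiple unfolding invariant_fields_def by blast

lemma xdx_multiples_subset_invariant_fields:
  assumes "\<And>h. h \<in> H \<Longrightarrow> h = mid \<or> h = mnegid \<or> (hyperbolic h \<and> fixset h = {Fin 0, Infty})"
  shows "{Z. \<exists>\<kappa>. Z = (\<lambda>p. \<kappa> * xdx p)} \<subseteq> invariant_fields H"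
proof clarify
  fix \<kappa> :: real
  have "invariant_by h (\<lambda>p. \<kappa> * xdx p)" if "h \<in> H" for h
    using assms[OF that] invariant_by_mid_mnegid xdx_multiple_invariant_by_hyperbolic by blast
  then show "(\<lambda>p. \<kappa> * xdx p) \<in> invariant_fields H"
    using xdx_multiple_in_vector_fields by (simp add: invariant_fields_def)
qed

lemma invariant_fields_eq_zero:
  assumes only_xdx: "invariant_fields H \<subseteq> {Z. \<exists>\<kappa>. Z = (\<lambda>p. \<kappa> * xdx p)}"
    and "h \<in> H" "elliptic h" "act h ` {Fin 0, Infty} = {Fin 0, Infty}"
  shows "invariant_fields H = {\<lambda>p. 0}"
proof
  show "invariant_fields H \<subseteq> {\<lambda>p. 0}"
  proof
    fix Z
    assume Z: "Z \<in> invariant_fields H"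
    with only_xdx obtain \<kappa> where Z_eq: "Z = (\<lambda>p. \<kappa> * xdx p)"
      by blast
    from Z \<open>h \<in> H\<close> have "invariant_by h (\<lambda>p. \<kappa> * xdx p)"
      unfolding Z_eq invariant_fields_def by blast
    with \<open>elliptic h\<close> \<open>act h ` {Fin 0, Infty} = {Fin 0, Infty}\<close> have "\<kappa> = 0"
      by (rule xdx_multiple_invariant_by_elliptic_imp_zero)
    then show "Z \<in> {\<lambda>p. 0}"
      using Z_eq by simp
  qed
qed (simp add: zero_in_invariant_fields)

theorem lemma3p15:
  shows "(\<forall>Z h. Z \<in> vector_fields \<longrightarrow> hyperbolic h \<longrightarrow> fixset h = {Fin 0, Infty}
            \<longrightarrow> invariant_by h Z \<longrightarrow> (\<exists>\<kappa>::real. Z = (\<lambda>p. \<kappa> * xdx p)))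
    \<and> (\<forall>H. psl_subgroup H \<longrightarrow> (\<exists>h\<in>H. hyperbolic h)
            \<longrightarrow> (\<forall>h\<in>H. h = mid \<or> h = mnegid
                  \<or> (hyperbolic h \<and> fixset h = {Fin 0, Infty})
                  \<or> (elliptic h \<and> act h ` {Fin 0, Infty} = {Fin 0, Infty}))
            \<longrightarrow> ((\<not> (\<exists>h\<in>H. elliptic h) \<longrightarrow>
                    invariant_fields H = {Z. \<exists>\<kappa>::real. Z = (\<lambda>p. \<kappa> * xdx p)})
               \<and> ((\<exists>h\<in>H. elliptic h) \<longrightarrow> invariant_fields H = {\<lambda>p. 0})))"
proof (intro conjI allI impI)
  fix Z h
  assume "Z \<in> vector_fields" "hyperbolic h" "fixset h = {Fin 0, Infty}" "invariant_by h Z"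
  then show "\<exists>\<kappa>::real. Z = (\<lambda>p. \<kappa> * xdx p)"
    by (rule hyperbolic_invariant_field_eq_xdx_multiple)
next
  fix H :: "mat2 set"
  assume "\<exists>h\<in>H. hyperbolic h" and members: "\<forall>h\<in>H. h = mid \<or> h = mnegid
                  \<or> (hyperbolic h \<and> fixset h = {Fin 0, Infty})
                  \<or> (elliptic h \<and> act h ` {Fin 0, Infty} = {Fin 0, Infty})"
  have hyperbolic_fixes: "fixset h = {Fin 0, Infty}" if "h \<in> H" "hyperbolic h" for h
    using bspec[OF members that(1)] that(2) not_hyperbolic_mid_mnegid hyperbolic_not_elliptic
    by (elim disjE conjE) simp_all
  have elliptic_swaps: "act h ` {Fin 0, Infty} = {Fin 0, Infty}" if "h \<in> H" "elliptic h" for h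
    using bspec[OF members that(1)] that(2) not_elliptic_mid_mnegid hyperbolic_not_elliptic
    by (elim disjE conjE) simp_all
  obtain h0 where h0: "h0 \<in> H" "hyperbolic h0"
    using \<open>\<exists>h\<in>H. hyperbolic h\<close> by blast
  have only_xdx: "invariant_fields H \<subseteq> {Z. \<exists>\<kappa>. Z = (\<lambda>p. \<kappa> * xdx p)}"
    using invariant_fields_subset_xdx_multiples[OF h0 hyperbolic_fixes[OF h0]] .
  show "invariant_fields H = {Z. \<exists>\<kappa>::real. Z = (\<lambda>p. \<kappa> * xdx p)}"
    if "\<not> (\<exists>h\<in>H. elliptic h)"
  proof
    have "h = mid \<or> h = mnegid \<or> (hyperbolic h \<and> fixset h = {Fin 0, Infty})" if "h \<in> H" for h
      using bspec[OF members that] \<open>\<not> (\<exists>h\<in>H. elliptic h)\<close> that by (elim disjE conjE) auto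
    then show "{Z. \<exists>\<kappa>. Z = (\<lambda>p. \<kappa> * xdx p)} \<subseteq> invariant_fields H"
      by (rule xdx_multiples_subset_invariant_fields)
  qed (rule only_xdx)
  show "invariant_fields H = {\<lambda>p. 0}" if "\<exists>h\<in>H. elliptic h"
  proof -
    from that obtain h where h: "h \<in> H" "elliptic h"
      by blast
    show ?thesis
      using invariant_fields_eq_zero[OF only_xdx h elliptic_swaps[OF h]] .
  qed
qed

end
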